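(* Let $X$ be a compact metric space and $f\colon X\to X$ continuous. Let $(Z_n^1)_n,\dots,(Z_n^k)_n$ be a finite collection of sequences of subsets of $X$, and write $Z_n=\bigcup_{j=1}^kZ_n^j$. Then for every $\xi\in C(X)$, $$\overline{CP}_{(Z_n)}(\xi)=\max_{1\le j\le k}\overline{CP}_{(Z_n^j)_n}(\xi).$$
   Context: $S_n\xi=\sum_{i=0}^{n-1}\xi\circ f^i$; $B(x,n,\delta)=\{y\mid d(f^ix,f^iy)<\delta,\ 0\le i\le n\}$. For a sequence $(Y_n)$ of subsets, $\Lambda_n(Y_n,\xi,\delta)=\inf\{\sum_{x\in E}e^{S_n\xi(x)}\mid\bigcup_{x\in E}B(x,n,\delta)\supset Y_n\}$ and the upper capacity pressure is $\overline{CP}_{(Y_n)}(\xi)=\lim_{\delta\to0}\limsup_{n\to\infty}\frac1n\log\Lambda_n(Y_n,\xi,\delta)$. *)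

theory Defs
  imports "HOL-Analysis.Analysis" "HOL-Library.Extended_Real"
begin

definition birkhoff_sum :: "('a \<Rightarrow> 'a) \<Rightarrow> ('a \<Rightarrow> real) \<Rightarrow> nat \<Rightarrow> 'a \<Rightarrow> real" where
  "birkhoff_sum f \<xi> n x = (\<Sum>i<n. \<xi> ((f ^^ i) x))"

definition bowen_ball :: "'a::metric_space set \<Rightarrow> ('a \<Rightarrow> 'a) \<Rightarrow> 'a \<Rightarrow> nat \<Rightarrow> real \<Rightarrow> 'a set" where
  "bowen_ball X f x n \<delta> = {y \<in> X. \<forall>i\<le>n. dist ((f ^^ i) x) ((f ^^ i) y) < \<delta>}"

definition Lambda_n :: "'a::metric_space set \<Rightarrow> ('a \<Rightarrow> 'a) \<Rightarrow> nat \<Rightarrow> 'a set \<Rightarrow> ('a \<Rightarrow> real) \<Rightarrow> real \<Rightarrow> ereal" where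
  "Lambda_n X f n Y \<xi> \<delta> =
     Inf {ereal (\<Sum>x\<in>E. exp (birkhoff_sum f \<xi> n x)) | E.
            finite E \<and> E \<subseteq> X \<and> Y \<subseteq> (\<Union>x\<in>E. bowen_ball X f x n \<delta>)}"

definition eln :: "ereal \<Rightarrow> ereal" where
  "eln v = (if v \<le> 0 then -\<infinity> else if v = \<infinity> then \<infinity> else ereal (ln (real_of_ereal v)))"

definition upper_cap_pressure :: "'a::metric_space set \<Rightarrow> ('a \<Rightarrow> 'a) \<Rightarrow> (nat \<Rightarrow> 'a set) \<Rightarrow> ('a \<Rightarrow> real) \<Rightarrow> ereal" where
  "upper_cap_pressure X f Y \<xi> =
     Lim (at_right 0) (\<lambda>\<delta>::real. limsup (\<lambda>n. eln (Lambda_n X f n (Y n) \<xi> \<delta>) / ereal (real n)))"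

end

theory Submission
  imports Defs
begin

text \<open>
  Covers of the pieces \<open>Z\<^sub>n\<^sup>j\<close> combine to a cover of their union, so
  \<open>\<Lambda>\<^sub>n(Z\<^sub>n) \<le> \<Sum>\<^sub>j \<Lambda>\<^sub>n(Z\<^sub>n\<^sup>j) \<le> k max\<^sub>j \<Lambda>\<^sub>n(Z\<^sub>n\<^sup>j)\<close>. The factor \<open>k\<close>
  contributes only \<open>(log k)/n \<longrightarrow> 0\<close>, and the limsup of a finite maximum is the maximum
  of the limsups; together with monotonicity this gives the identity for every fixed \<open>\<delta>\<close>.
  Since \<open>\<Lambda>\<^sub>n\<close> decreases in \<open>\<delta>\<close>, the limit \<open>\<delta> \<rightarrow> 0\<close> is a supremum, which commutes
  with the maximum over \<open>j\<close>.
\<close>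

lemma Lim_at_right_antimono_eq_SUP:
  fixes g :: "real \<Rightarrow> 'b::{complete_linorder, linorder_topology}"
  assumes "\<And>x y. a < x \<Longrightarrow> x \<le> y \<Longrightarrow> g y \<le> g x"
  shows "Lim (at_right a) g = (SUP x\<in>{a<..}. g x)"
proof (rule tendsto_Lim)
  show "\<not> trivial_limit (at_right a)" by simp
  show "(g \<longlongrightarrow> (SUP x\<in>{a<..}. g x)) (at_right a)"
  proof (rule increasing_tendsto)
    show "eventually (\<lambda>x. g x \<le> (SUP x\<in>{a<..}. g x)) (at_right a)"
      by (auto simp: eventually_at_right_field intro!: exI[of _ "a + 1"] SUP_upper)
  next
    fix y assume "y < (SUP x\<in>{a<..}. g x)"
    then obtain x0 where x0: "a < x0" "y < g x0" by (auto simp: less_SUP_iff)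
    have "y < g x" if "a < x" "x < x0" for x
      using x0(2) assms[of x x0] that by simp
    then show "eventually (\<lambda>x. y < g x) (at_right a)"
      unfolding eventually_at_right_field using x0(1) by blast
  qed
qed

lemma Limsup_SUP_finite:
  fixes g :: "'i \<Rightarrow> 'a \<Rightarrow> 'b::complete_linorder"
  assumes "finite J"
  shows "Limsup F (\<lambda>x. SUP j\<in>J. g j x) = (SUP j\<in>J. Limsup F (g j))"
proof (rule antisym)
  show "Limsup F (\<lambda>x. SUP j\<in>J. g j x) \<le> (SUP j\<in>J. Limsup F (g j))"
    unfolding Limsup_le_iff
  proof (intro allI impI)
    fix y assume y: "(SUP j\<in>J. Limsup F (g j)) < y"
    then have "\<forall>j\<in>J. eventually (\<lambda>x. g j x < y) F"
      by (auto intro!: Limsup_lessD dest: SUP_lessD)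
    then have "eventually (\<lambda>x. \<forall>j\<in>J. g j x < y) F"
      by (rule eventually_ball_finite[OF assms])
    then show "eventually (\<lambda>x. (SUP j\<in>J. g j x) < y) F"
    proof (rule eventually_mono)
      fix x assume "\<forall>j\<in>J. g j x < y"
      then show "(SUP j\<in>J. g j x) < y"
        using assms y by (cases "J = {}") (auto simp: finite_Sup_less_iff)
    qed
  qed
  show "(SUP j\<in>J. Limsup F (g j)) \<le> Limsup F (\<lambda>x. SUP j\<in>J. g j x)"
    by (intro SUP_least Limsup_mono always_eventually allI SUP_upper)
qed

lemma ereal_add_divide_distrib:
  fixes x :: ereal
  assumes "0 < d"
  shows "(ereal a + x) / ereal d = ereal (a / d) + x / ereal d"
  using assms by (cases x) (simp_all add: add_divide_distrib)

lemma eln_mono: "x \<le> y \<Longrightarrow> eln x \<le> eln y"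
  unfolding eln_def by (cases x; cases y) auto

lemma eln_mult:
  assumes "0 < c" "0 \<le> m"
  shows "eln (ereal c * m) = ereal (ln c) + eln m"
  using assms by (cases m) (auto simp: eln_def ln_mult mult_le_0_iff)

lemma eln_sum_le:
  fixes a :: "'i \<Rightarrow> ereal"
  assumes "finite J" "J \<noteq> {}" "\<And>j. j \<in> J \<Longrightarrow> 0 \<le> a j"
  obtains j where "j \<in> J" "eln (\<Sum>i\<in>J. a i) \<le> ereal (ln (card J)) + eln (a j)"
proof -
  have "Max (a ` J) \<in> a ` J"
    using assms(1,2) by simp
  then obtain j where j: "j \<in> J" "a j = Max (a ` J)"
    by (metis imageE)
  have card: "0 < card J"
    using assms(1,2) by (simp add: card_gt_0_iff)
  have "(\<Sum>i\<in>J. a i) \<le> ereal (card J) * a j"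
  proof (cases "a j")
    case (real r)
    have "(\<Sum>i\<in>J. a i) \<le> (\<Sum>i\<in>J. ereal r)"
      using j assms(1) real by (intro sum_mono) simp
    then show ?thesis
      using real by simp
  next
    case PInf
    then show ?thesis
      using card by simp
  next
    case MInf
    then show ?thesis
      using assms(3)[OF j(1)] by simp
  qed
  then have "eln (\<Sum>i\<in>J. a i) \<le> eln (ereal (card J) * a j)"
    by (rule eln_mono)
  also have "\<dots> = ereal (ln (card J)) + eln (a j)"
    using card assms(3)[OF j(1)] by (intro eln_mult) simp_all
  finally show thesis
    using j(1) that by blast
qed

lemma Lambda_n_le_cover:
  assumes "finite E" "E \<subseteq> X" "Y \<subseteq> (\<Union>x\<in>E. bowen_ball X f x n \<delta>)"
  shows "Lambda_n X f n Y \<xi> \<delta> \<le> ereal (\<Sum>x\<in>E. exp (birkhoff_sum f \<xi> n x))"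
  unfolding Lambda_n_def by (rule Inf_lower) (use assms in blast)

lemma Lambda_n_lessE:
  assumes "Lambda_n X f n Y \<xi> \<delta> < c"
  obtains E where "finite E" "E \<subseteq> X" "Y \<subseteq> (\<Union>x\<in>E. bowen_ball X f x n \<delta>)"
    "ereal (\<Sum>x\<in>E. exp (birkhoff_sum f \<xi> n x)) < c"
  using assms unfolding Lambda_n_def by (auto simp: Inf_less_iff)

lemma Lambda_n_nonneg: "0 \<le> Lambda_n X f n Y \<xi> \<delta>"
  unfolding Lambda_n_def by (auto intro!: Inf_greatest sum_nonneg)

lemma Lambda_n_empty: "Lambda_n X f n {} \<xi> \<delta> = 0"
proof -
  have "Lambda_n X f n {} \<xi> \<delta> \<le> ereal (\<Sum>x\<in>{}. exp (birkhoff_sum f \<xi> n x))"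
    by (rule Lambda_n_le_cover) auto
  then show ?thesis
    using Lambda_n_nonneg[of X f n "{}" \<xi> \<delta>] by (simp add: zero_ereal_def)
qed

lemma Lambda_n_mono:
  assumes "Y \<subseteq> Y'"
  shows "Lambda_n X f n Y \<xi> \<delta> \<le> Lambda_n X f n Y' \<xi> \<delta>"
  unfolding Lambda_n_def by (rule Inf_superset_mono) (use assms in blast)

lemma Lambda_n_antimono_radius:
  assumes "\<delta> \<le> \<delta>'"
  shows "Lambda_n X f n Y \<xi> \<delta>' \<le> Lambda_n X f n Y \<xi> \<delta>"
proof -
  have "bowen_ball X f x n \<delta> \<subseteq> bowen_ball X f x n \<delta>'" for x
    using assms unfolding bowen_ball_def by (auto intro: less_le_trans)
  then have cover: "Y \<subseteq> (\<Union>x\<in>E. bowen_ball X f x n \<delta>')"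
    if "Y \<subseteq> (\<Union>x\<in>E. bowen_ball X f x n \<delta>)" for E
    using that by blast
  show ?thesis
    unfolding Lambda_n_def by (rule Inf_superset_mono) (use cover in blast)
qed

lemma Lambda_n_Un_le:
  "Lambda_n X f n (Y \<union> Y') \<xi> \<delta> \<le> Lambda_n X f n Y \<xi> \<delta> + Lambda_n X f n Y' \<xi> \<delta>"
proof -
  let ?s = "\<lambda>E. \<Sum>x\<in>E. exp (birkhoff_sum f \<xi> n x)"
  consider "Lambda_n X f n Y \<xi> \<delta> = \<infinity> \<or> Lambda_n X f n Y' \<xi> \<delta> = \<infinity>"
    | a b where "Lambda_n X f n Y \<xi> \<delta> = ereal a" "Lambda_n X f n Y' \<xi> \<delta> = ereal b"
    using Lambda_n_nonneg[of X f n Y \<xi> \<delta>] Lambda_n_nonneg[of X f n Y' \<xi> \<delta>]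
    by (cases "Lambda_n X f n Y \<xi> \<delta>"; cases "Lambda_n X f n Y' \<xi> \<delta>") auto
  then show ?thesis
  proof cases
    case 1
    then show ?thesis
      using Lambda_n_nonneg[of X f n Y \<xi> \<delta>] Lambda_n_nonneg[of X f n Y' \<xi> \<delta>] by auto
  next
    case (2 a b)
    show ?thesis
    proof (rule ereal_le_epsilon2)
      fix e :: real assume "0 < e"
      then have "Lambda_n X f n Y \<xi> \<delta> < ereal (a + e / 2)"
        and "Lambda_n X f n Y' \<xi> \<delta> < ereal (b + e / 2)"
        using 2 by simp_all
      then obtain E E' where E: "finite E" "E \<subseteq> X" "Y \<subseteq> (\<Union>x\<in>E. bowen_ball X f x n \<delta>)"
          "ereal (?s E) < ereal (a + e / 2)"
        and E': "finite E'" "E' \<subseteq> X" "Y' \<subseteq> (\<Union>x\<in>E'. bowen_ball X f x n \<delta>)"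
          "ereal (?s E') < ereal (b + e / 2)"
        by (elim Lambda_n_lessE)
      have "Lambda_n X f n (Y \<union> Y') \<xi> \<delta> \<le> ?s (E \<union> E')"
        by (rule Lambda_n_le_cover) (use E E' in auto)
      also have "?s (E \<union> E') \<le> ?s E + ?s E'"
        using E(1) E'(1) by (simp add: sum_Un sum_nonneg)
      also have "?s E + ?s E' \<le> a + b + e"
        using E(4) E'(4) by simp
      finally show "Lambda_n X f n (Y \<union> Y') \<xi> \<delta>
          \<le> Lambda_n X f n Y \<xi> \<delta> + Lambda_n X f n Y' \<xi> \<delta> + ereal e"
        using 2 by simp
    qed
  qed
qed

lemma Lambda_n_UN_le:
  assumes "finite J"
  shows "Lambda_n X f n (\<Union>j\<in>J. Y j) \<xi> \<delta> \<le> (\<Sum>j\<in>J. Lambda_n X f n (Y j) \<xi> \<delta>)"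
  using assms
proof (induction J rule: finite_induct)
  case empty
  then show ?case by (simp add: Lambda_n_empty)
next
  case (insert j J)
  have "Lambda_n X f n (\<Union>i\<in>insert j J. Y i) \<xi> \<delta>
      \<le> Lambda_n X f n (Y j) \<xi> \<delta> + Lambda_n X f n (\<Union>i\<in>J. Y i) \<xi> \<delta>"
    using Lambda_n_Un_le[of X f n "Y j" "\<Union>i\<in>J. Y i" \<xi> \<delta>] by (simp only: UN_insert)
  also have "\<dots> \<le> Lambda_n X f n (Y j) \<xi> \<delta> + (\<Sum>i\<in>J. Lambda_n X f n (Y i) \<xi> \<delta>)"
    using insert.IH by (rule add_left_mono)
  also have "\<dots> = (\<Sum>i\<in>insert j J. Lambda_n X f n (Y i) \<xi> \<delta>)"
    by (rule sum.insert[OF insert.hyps, symmetric])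
  finally show ?case .
qed

definition upper_cap_pressure_at ::
    "'a::metric_space set \<Rightarrow> ('a \<Rightarrow> 'a) \<Rightarrow> (nat \<Rightarrow> 'a set) \<Rightarrow> ('a \<Rightarrow> real) \<Rightarrow> real \<Rightarrow> ereal" where
  "upper_cap_pressure_at X f Y \<xi> \<delta> =
     limsup (\<lambda>n. eln (Lambda_n X f n (Y n) \<xi> \<delta>) / ereal (real n))"

lemma limsup_eln_div_mono:
  assumes "\<And>n. a n \<le> b n"
  shows "limsup (\<lambda>n. eln (a n) / ereal (real n)) \<le> limsup (\<lambda>n. eln (b n) / ereal (real n))"
proof (rule Limsup_mono)
  show "\<forall>\<^sub>F n in sequentially. eln (a n) / ereal (real n) \<le> eln (b n) / ereal (real n)"
    using eventually_gt_at_top[of 0]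
    by eventually_elim (intro ereal_divide_right_mono eln_mono assms, simp)
qed

lemma upper_cap_pressure_eq_SUP:
  "upper_cap_pressure X f Y \<xi> = (SUP \<delta>\<in>{0<..}. upper_cap_pressure_at X f Y \<xi> \<delta>)"
  unfolding upper_cap_pressure_def upper_cap_pressure_at_def
  by (intro Lim_at_right_antimono_eq_SUP limsup_eln_div_mono Lambda_n_antimono_radius)

lemma upper_cap_pressure_at_UN:
  assumes "finite J" "J \<noteq> {}"
  shows "upper_cap_pressure_at X f (\<lambda>n. \<Union>j\<in>J. Y j n) \<xi> \<delta>
           = (SUP j\<in>J. upper_cap_pressure_at X f (Y j) \<xi> \<delta>)"
proof (rule antisym)
  define L where "L j n = Lambda_n X f n (Y j n) \<xi> \<delta>" for j n
  define b where "b j n = eln (L j n) / ereal (real n)" for j n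
  define c where "c n = ereal (ln (card J) / real n)" for n
  have "\<forall>\<^sub>F n in sequentially.
      eln (Lambda_n X f n (\<Union>j\<in>J. Y j n) \<xi> \<delta>) / ereal (real n) \<le> c n + (SUP j\<in>J. b j n)"
    using eventually_gt_at_top[of 0]
  proof eventually_elim
    case (elim n)
    obtain j where j: "j \<in> J"
      and sum_bound: "eln (\<Sum>i\<in>J. L i n) \<le> ereal (ln (card J)) + eln (L j n)"
      by (rule eln_sum_le[of J "\<lambda>i. L i n", OF assms]) (simp add: L_def Lambda_n_nonneg)
    have "eln (Lambda_n X f n (\<Union>j\<in>J. Y j n) \<xi> \<delta>) \<le> ereal (ln (card J)) + eln (L j n)"
      using sum_bound unfolding L_def
      by (rule order_trans[OF eln_mono[OF Lambda_n_UN_le[OF assms(1)]]])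
    then have "eln (Lambda_n X f n (\<Union>j\<in>J. Y j n) \<xi> \<delta>) / ereal (real n)
        \<le> (ereal (ln (card J)) + eln (L j n)) / ereal (real n)"
      using elim by (intro ereal_divide_right_mono) simp_all
    also have "\<dots> = c n + b j n"
      using elim by (simp add: ereal_add_divide_distrib c_def b_def)
    also have "\<dots> \<le> c n + (SUP j\<in>J. b j n)"
      using j by (intro add_left_mono SUP_upper)
    finally show ?case .
  qed
  then have "upper_cap_pressure_at X f (\<lambda>n. \<Union>j\<in>J. Y j n) \<xi> \<delta>
      \<le> limsup (\<lambda>n. c n + (SUP j\<in>J. b j n))"
    unfolding upper_cap_pressure_at_def by (rule Limsup_mono)
  also have "\<dots> = limsup (\<lambda>n. SUP j\<in>J. b j n)"
  proof -
    have "c \<longlonglongrightarrow> 0"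
      unfolding c_def zero_ereal_def by (intro tendsto_ereal lim_const_over_n)
    then show ?thesis
      by (simp add: ereal_limsup_lim_add)
  qed
  also have "\<dots> = (SUP j\<in>J. upper_cap_pressure_at X f (Y j) \<xi> \<delta>)"
    unfolding Limsup_SUP_finite[OF assms(1)] b_def L_def upper_cap_pressure_at_def ..
  finally show "upper_cap_pressure_at X f (\<lambda>n. \<Union>j\<in>J. Y j n) \<xi> \<delta>
      \<le> (SUP j\<in>J. upper_cap_pressure_at X f (Y j) \<xi> \<delta>)" .
  show "(SUP j\<in>J. upper_cap_pressure_at X f (Y j) \<xi> \<delta>)
      \<le> upper_cap_pressure_at X f (\<lambda>n. \<Union>j\<in>J. Y j n) \<xi> \<delta>"
    unfolding upper_cap_pressure_at_def
    by (intro SUP_least limsup_eln_div_mono Lambda_n_mono) auto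
qed

theorem lemma4p1:
  fixes X :: "'a::metric_space set" and f :: "'a \<Rightarrow> 'a"
    and Z :: "nat \<Rightarrow> nat \<Rightarrow> 'a set" and k :: nat and \<xi> :: "'a \<Rightarrow> real"
  assumes "compact X" and "continuous_on X f" and "f ` X \<subseteq> X"
    and "k \<ge> 1"
    and "\<And>j n. j \<in> {1..k} \<Longrightarrow> Z j n \<subseteq> X"
    and "continuous_on X \<xi>"
  shows "upper_cap_pressure X f (\<lambda>n. \<Union>j\<in>{1..k}. Z j n) \<xi>
           = Max ((\<lambda>j. upper_cap_pressure X f (Z j) \<xi>) ` {1..k})"
proof -
  have J: "finite {1..k}" "{1..k} \<noteq> {}"
    using \<open>k \<ge> 1\<close> by auto
  have "upper_cap_pressure X f (\<lambda>n. \<Union>j\<in>{1..k}. Z j n) \<xi>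
      = (SUP \<delta>\<in>{0<..}. SUP j\<in>{1..k}. upper_cap_pressure_at X f (Z j) \<xi> \<delta>)"
    by (simp only: upper_cap_pressure_eq_SUP upper_cap_pressure_at_UN[OF J])
  also have "\<dots> = (SUP j\<in>{1..k}. SUP \<delta>\<in>{0<..}. upper_cap_pressure_at X f (Z j) \<xi> \<delta>)"
    by (rule SUP_commute)
  also have "\<dots> = Max ((\<lambda>j. upper_cap_pressure X f (Z j) \<xi>) ` {1..k})"
    using J by (simp add: upper_cap_pressure_eq_SUP cSup_eq_Max)
  finally show ?thesis .
qed

end
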